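(* Let $G$ be finite and $z\in\mathbb C\setminus\{0\}$. Then the eigenspace $\{f\in D_\infty:\mathcal Tf=zf\}$ is contained in $D_1$ and, under the identification $D_1\cong\mathrm{Map}(E)$, equals $\mathrm{Eq}(S,z\,\mathrm{Id})$. If $z\notin\{-1,0,1\}$, the twisted gradient $d_z$ gives an isomorphism from $\mathrm{Eq}(\Sigma,R_z)=\mathrm{Eq}(\Delta,L_z)$ onto this eigenspace.
   Context: $G$ is a finite connected graph with vertex set $V$ (no loops, no multiple edges, every vertex of degree $\ge2$); $\deg v=1+q(v)$. $E$ oriented edges, $\iota,\tau$ initial/terminal vertex maps, $\bar e$ opposite; turn $e\rightsquigarrow e'$ iff $\tau(e)=\iota(e')$, $e'\ne\bar e$. $P$ = infinite paths $(e_1,e_2,\dots)$ with $e_i\rightsquigarrow e_{i+1}$; $(\mathcal Tf)(e_1,\dots)=\sum_{e_0\rightsquigarrow e_1}f(e_0,e_1,\dots)$. $D_m$ = functions on $P$ depending only on $e_1,\dots,e_m$; $D_\infty=\bigcup_mD_m$; $D_1\cong\mathrm{Map}(E)$. $(Sg)(e)=\sum_{e'\rightsquigarrow e}g(e')$; $(\Sigma f)(v)=\sum_{w\text{ adj. }v}f(w)$; $(\Delta f)(v)=\frac{1}{1+q(v)}\sum_{w\text{ adj. }v}f(w)$; $R_z$, $L_z$ = multiplication by $z+q(v)z^{-1}$ resp. $\frac{z+z^{-1}q(v)}{1+q(v)}$; $d_zf=f\circ\iota-z^{-1}f\circ\tau$; $\mathrm{Eq}(A,B)=\{f:Af=Bf\}$.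 *)

theory Defs
  imports Complex_Main
begin

text \<open>Oriented edges are pairs (u,w) with adj u w;
iota = fst, tau = snd, opposite edge = prod.swap.
Infinite paths are indexed from 0 (so p 0 is e_1 of the paper).\<close>

definition graph_ok :: "'v set \<Rightarrow> ('v \<Rightarrow> 'v \<Rightarrow> bool) \<Rightarrow> bool" where
  "graph_ok V adj \<longleftrightarrow> finite V \<and> V \<noteq> {}
     \<and> (\<forall>u w. adj u w \<longrightarrow> u \<in> V \<and> w \<in> V)
     \<and> (\<forall>u w. adj u w \<longrightarrow> adj w u)
     \<and> (\<forall>u. \<not> adj u u)
     \<and> (\<forall>u\<in>V. \<forall>w\<in>V. (u, w) \<in> {(a, b). adj a b}\<^sup>*)
     \<and> (\<forall>v\<in>V. card {w. adj v w} \<ge> 2)"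

definition Edges :: "('v \<Rightarrow> 'v \<Rightarrow> bool) \<Rightarrow> ('v \<times> 'v) set" where
  "Edges adj = {(u, w). adj u w}"

definition qv :: "('v \<Rightarrow> 'v \<Rightarrow> bool) \<Rightarrow> 'v \<Rightarrow> nat" where
  "qv adj v = card {w. adj v w} - 1"

definition turn :: "'v \<times> 'v \<Rightarrow> 'v \<times> 'v \<Rightarrow> bool" where
  "turn e e' \<longleftrightarrow> snd e = fst e' \<and> e' \<noteq> prod.swap e"

definition Paths :: "('v \<Rightarrow> 'v \<Rightarrow> bool) \<Rightarrow> (nat \<Rightarrow> 'v \<times> 'v) set" where
  "Paths adj = {p. \<forall>i. p i \<in> Edges adj \<and> turn (p i) (p (Suc i))}"

definition FunP :: "('v \<Rightarrow> 'v \<Rightarrow> bool) \<Rightarrow> ((nat \<Rightarrow> 'v \<times> 'v) \<Rightarrow> complex) set" where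
  "FunP adj = {f. \<forall>p. p \<notin> Paths adj \<longrightarrow> f p = 0}"

definition Transfer :: "('v \<Rightarrow> 'v \<Rightarrow> bool) \<Rightarrow> ((nat \<Rightarrow> 'v \<times> 'v) \<Rightarrow> complex)
    \<Rightarrow> (nat \<Rightarrow> 'v \<times> 'v) \<Rightarrow> complex" where
  "Transfer adj f p = (if p \<in> Paths adj
      then (\<Sum>e0\<in>{e0\<in>Edges adj. turn e0 (p 0)}. f (case_nat e0 p)) else 0)"

definition Dm :: "('v \<Rightarrow> 'v \<Rightarrow> bool) \<Rightarrow> nat \<Rightarrow> ((nat \<Rightarrow> 'v \<times> 'v) \<Rightarrow> complex) set" where
  "Dm adj m = {f \<in> FunP adj. \<forall>p\<in>Paths adj. \<forall>p'\<in>Paths adj.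
                 (\<forall>i<m. p i = p' i) \<longrightarrow> f p = f p'}"

definition Dinf :: "('v \<Rightarrow> 'v \<Rightarrow> bool) \<Rightarrow> ((nat \<Rightarrow> 'v \<times> 'v) \<Rightarrow> complex) set" where
  "Dinf adj = (\<Union>m. Dm adj m)"

definition Eigenspace :: "('v \<Rightarrow> 'v \<Rightarrow> bool) \<Rightarrow> complex \<Rightarrow> ((nat \<Rightarrow> 'v \<times> 'v) \<Rightarrow> complex) set" where
  "Eigenspace adj z = {f \<in> Dinf adj. Transfer adj f = (\<lambda>p. z * f p)}"

text \<open>Map(E): functions on oriented edges, vanishing off E; the identification
Map(E) ~ D_1 is g |-> (p |-> g(e_1)).\<close>
definition MapE :: "('v \<Rightarrow> 'v \<Rightarrow> bool) \<Rightarrow> ('v \<times> 'v \<Rightarrow> complex) set" where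
  "MapE adj = {g. \<forall>e. e \<notin> Edges adj \<longrightarrow> g e = 0}"

definition liftE :: "('v \<Rightarrow> 'v \<Rightarrow> bool) \<Rightarrow> ('v \<times> 'v \<Rightarrow> complex) \<Rightarrow> (nat \<Rightarrow> 'v \<times> 'v) \<Rightarrow> complex" where
  "liftE adj g p = (if p \<in> Paths adj then g (p 0) else 0)"

definition Sop :: "('v \<Rightarrow> 'v \<Rightarrow> bool) \<Rightarrow> ('v \<times> 'v \<Rightarrow> complex) \<Rightarrow> 'v \<times> 'v \<Rightarrow> complex" where
  "Sop adj g e = (\<Sum>e'\<in>{e'\<in>Edges adj. turn e' e}. g e')"

definition EqS :: "('v \<Rightarrow> 'v \<Rightarrow> bool) \<Rightarrow> complex \<Rightarrow> ('v \<times> 'v \<Rightarrow> complex) set" where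
  "EqS adj z = {g \<in> MapE adj. \<forall>e\<in>Edges adj. Sop adj g e = z * g e}"

definition MapV :: "'v set \<Rightarrow> ('v \<Rightarrow> complex) set" where
  "MapV V = {f. \<forall>v. v \<notin> V \<longrightarrow> f v = 0}"

definition SigmaOp :: "('v \<Rightarrow> 'v \<Rightarrow> bool) \<Rightarrow> ('v \<Rightarrow> complex) \<Rightarrow> 'v \<Rightarrow> complex" where
  "SigmaOp adj f v = (\<Sum>w\<in>{w. adj v w}. f w)"

definition DeltaOp :: "('v \<Rightarrow> 'v \<Rightarrow> bool) \<Rightarrow> ('v \<Rightarrow> complex) \<Rightarrow> 'v \<Rightarrow> complex" where
  "DeltaOp adj f v = (1 / (1 + of_nat (qv adj v))) * (\<Sum>w\<in>{w. adj v w}. f w)"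

definition Rz :: "('v \<Rightarrow> 'v \<Rightarrow> bool) \<Rightarrow> complex \<Rightarrow> ('v \<Rightarrow> complex) \<Rightarrow> 'v \<Rightarrow> complex" where
  "Rz adj z f v = (z + of_nat (qv adj v) / z) * f v"

definition Lz :: "('v \<Rightarrow> 'v \<Rightarrow> bool) \<Rightarrow> complex \<Rightarrow> ('v \<Rightarrow> complex) \<Rightarrow> 'v \<Rightarrow> complex" where
  "Lz adj z f v = ((z + of_nat (qv adj v) / z) / (1 + of_nat (qv adj v))) * f v"

definition EqV :: "'v set \<Rightarrow> (('v \<Rightarrow> complex) \<Rightarrow> 'v \<Rightarrow> complex)
      \<Rightarrow> (('v \<Rightarrow> complex) \<Rightarrow> 'v \<Rightarrow> complex) \<Rightarrow> ('v \<Rightarrow> complex) set" where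
  "EqV V A B = {f \<in> MapV V. \<forall>v\<in>V. A f v = B f v}"

definition dz :: "('v \<Rightarrow> 'v \<Rightarrow> bool) \<Rightarrow> complex \<Rightarrow> ('v \<Rightarrow> complex) \<Rightarrow> 'v \<times> 'v \<Rightarrow> complex" where
  "dz adj z f e = (if e \<in> Edges adj then f (fst e) - f (snd e) / z else 0)"

end

theory Submission
  imports Defs
begin

text \<open>Since every vertex has degree at least 2, every oriented edge starts an infinite
path, so a function in \<open>D\<^sub>m\<close> is determined by its values on the first \<open>m\<close> edges.
The transfer operator maps \<open>D\<^sub>m\<^sub>+\<^sub>1\<close> into \<open>D\<^sub>m\<close>, so for \<open>z \<noteq> 0\<close> an eigenfunction in
\<open>D\<^sub>m\<close> lies in \<open>D\<^sub>m\<^sub>-\<^sub>1\<close>, and descending we reach \<open>D\<^sub>1\<close>; on \<open>D\<^sub>1 \<cong> Map(E)\<close> the transfer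
operator is \<open>S\<close>. For the vertex picture, write \<open>A(u)\<close> for the sum of \<open>h\<close> over the edges
entering \<open>u\<close>: then \<open>S h = z h\<close> reads \<open>z h(u,w) = A(u) - h(w,u)\<close>, and adding this to \<open>z\<close>
times the same identity for \<open>(w,u)\<close> gives \<open>(z\<^sup>2 - 1) h(u,w) = z A(u) - A(w)\<close>. Hence
\<open>h = d\<^sub>z f\<close> for \<open>f = z A / (z\<^sup>2 - 1)\<close>, and summing over neighbours shows \<open>\<Sigma> f = R\<^sub>z f\<close>.
Conversely \<open>d\<^sub>z\<close> is injective because \<open>d\<^sub>z f = 0\<close> forces \<open>f(u) = f(u)/z\<^sup>2\<close>.\<close>

lemma graph_ok_sym: "graph_ok V adj \<Longrightarrow> adj u w \<Longrightarrow> adj w u"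
  by (simp add: graph_ok_def)

lemma graph_ok_in_V: "graph_ok V adj \<Longrightarrow> adj u w \<Longrightarrow> u \<in> V \<and> w \<in> V"
  by (simp add: graph_ok_def)

lemma graph_ok_finite_neighbours:
  assumes "graph_ok V adj"
  shows "finite {w. adj u w}"
proof (rule finite_subset)
  show "{w. adj u w} \<subseteq> V" using graph_ok_in_V[OF assms] by blast
  show "finite V" using assms by (simp add: graph_ok_def)
qed

lemma graph_ok_card_neighbours:
  assumes "graph_ok V adj" and "u \<in> V"
  shows "card {w. adj u w} = Suc (qv adj u)"
proof -
  have "card {w. adj u w} \<ge> 2" using assms by (simp add: graph_ok_def)
  thus ?thesis by (simp add: qv_def)
qed

lemma graph_ok_exists_neighbour:
  assumes "graph_ok V adj" and "u \<in> V"
  obtains w where "adj u w"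
  using graph_ok_card_neighbours[OF assms] by (metis Collect_empty_eq card.empty nat.distinct(1))

lemma graph_ok_exists_turn:
  assumes g: "graph_ok V adj" and e: "e \<in> Edges adj"
  shows "\<exists>e'\<in>Edges adj. turn e e'"
proof -
  obtain u w where ew: "e = (u, w)" and "adj u w" using e by (auto simp: Edges_def)
  hence "w \<in> V" using graph_ok_in_V[OF g] by blast
  hence "card {x. adj w x} \<ge> 2" using g by (simp add: graph_ok_def)
  hence "\<not> {x. adj w x} \<subseteq> {u}"
    using card_mono[of "{u}" "{x. adj w x}"] by auto
  then obtain x where "adj w x" "x \<noteq> u" by blast
  thus ?thesis using ew by (intro bexI[of _ "(w, x)"]) (auto simp: Edges_def turn_def)
qed

lemma Paths_edge: "p \<in> Paths adj \<Longrightarrow> p i \<in> Edges adj"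
  by (simp add: Paths_def)

lemma Paths_Cons:
  "p \<in> Paths adj \<Longrightarrow> e \<in> Edges adj \<Longrightarrow> turn e (p 0) \<Longrightarrow> case_nat e p \<in> Paths adj"
  unfolding Paths_def by (auto split: nat.split)

lemma graph_ok_exists_path:
  assumes g: "graph_ok V adj" and e: "e \<in> Edges adj"
  shows "\<exists>p\<in>Paths adj. p 0 = e"
proof -
  obtain next_edge where nxt: "\<And>e. e \<in> Edges adj \<Longrightarrow> next_edge e \<in> Edges adj \<and> turn e (next_edge e)"
    using graph_ok_exists_turn[OF g] by metis
  have edge: "(next_edge ^^ i) e \<in> Edges adj" for i
    by (induction i) (simp_all add: e nxt)
  have "(\<lambda>i. (next_edge ^^ i) e) \<in> Paths adj"
    unfolding Paths_def using edge nxt by simp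
  thus ?thesis by (intro bexI[of _ "\<lambda>i. (next_edge ^^ i) e"]) simp_all
qed

definition path_from :: "('v \<Rightarrow> 'v \<Rightarrow> bool) \<Rightarrow> 'v \<times> 'v \<Rightarrow> nat \<Rightarrow> 'v \<times> 'v" where
  "path_from adj e = (SOME p. p \<in> Paths adj \<and> p 0 = e)"

lemma
  assumes "graph_ok V adj" and "e \<in> Edges adj"
  shows path_from_in_Paths: "path_from adj e \<in> Paths adj"
    and path_from_0: "path_from adj e 0 = e"
  using someI_ex[OF graph_ok_exists_path[OF assms, unfolded Bex_def]]
  by (simp_all add: path_from_def)

lemma Dm_mono: "m \<le> n \<Longrightarrow> Dm adj m \<subseteq> Dm adj n"
  unfolding Dm_def by (auto dest: order.strict_trans2)

lemma Transfer_Dm_Suc: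
  assumes f: "f \<in> Dm adj (Suc (Suc m))"
  shows "Transfer adj f \<in> Dm adj (Suc m)"
proof -
  have "Transfer adj f p = Transfer adj f p'"
    if p: "p \<in> Paths adj" and p': "p' \<in> Paths adj" and eq: "\<forall>i<Suc m. p i = p' i" for p p'
  proof -
    have p0: "p 0 = p' 0" using eq by simp
    have "f (case_nat e p) = f (case_nat e p')" if "e \<in> Edges adj" "turn e (p 0)" for e
    proof -
      have "\<forall>i<Suc (Suc m). case_nat e p i = case_nat e p' i"
        using eq by (auto split: nat.split)
      moreover have "case_nat e p \<in> Paths adj" "case_nat e p' \<in> Paths adj"
        using Paths_Cons[OF p that] Paths_Cons[OF p' that(1)] that(2) p0 by simp_all
      ultimately show ?thesis
        using f unfolding Dm_def by blast
    qed
    thus ?thesis using p p' p0 by (simp add: Transfer_def)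
  qed
  moreover have "Transfer adj f \<in> FunP adj" by (simp add: FunP_def Transfer_def)
  ultimately show ?thesis unfolding Dm_def by blast
qed

lemma Dm_cancel_scalar:
  assumes "z \<noteq> 0" and "(\<lambda>p. z * f p) \<in> Dm adj m"
  shows "f \<in> Dm adj m"
proof -
  have "f \<in> FunP adj" using assms unfolding Dm_def FunP_def by simp
  moreover have "f p = f p'"
    if "p \<in> Paths adj" "p' \<in> Paths adj" "\<forall>i<m. p i = p' i" for p p'
  proof -
    have "z * f p = z * f p'" using assms(2) that unfolding Dm_def by blast
    thus ?thesis using assms(1) by simp
  qed
  ultimately show ?thesis unfolding Dm_def by blast
qed

lemma eigenfunction_Dm_imp_D1:
  assumes z: "z \<noteq> 0" and T: "Transfer adj f = (\<lambda>p. z * f p)" and f: "f \<in> Dm adj m"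
  shows "f \<in> Dm adj 1"
proof -
  have "f \<in> Dm adj (Suc n) \<Longrightarrow> f \<in> Dm adj 1" for n
  proof (induction n)
    case (Suc n)
    have "Transfer adj f \<in> Dm adj (Suc n)" using Suc.prems by (rule Transfer_Dm_Suc)
    hence "f \<in> Dm adj (Suc n)" using Dm_cancel_scalar[OF z] T by simp
    thus ?case by (rule Suc.IH)
  qed simp
  thus ?thesis using f Dm_mono[of m "Suc m"] by auto
qed

lemma Eigenspace_subset_D1: "z \<noteq> 0 \<Longrightarrow> Eigenspace adj z \<subseteq> Dm adj 1"
  unfolding Eigenspace_def Dinf_def using eigenfunction_Dm_imp_D1 by blast

lemma liftE_in_D1: "liftE adj g \<in> Dm adj 1"
  unfolding Dm_def FunP_def liftE_def by simp

lemma liftE_path_from: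
  assumes "graph_ok V adj" and "e \<in> Edges adj"
  shows "liftE adj g (path_from adj e) = g e"
  using path_from_in_Paths[OF assms] path_from_0[OF assms] by (simp add: liftE_def)

lemma inj_on_liftE:
  assumes "graph_ok V adj"
  shows "inj_on (liftE adj) (MapE adj)"
proof (rule inj_onI)
  fix g h assume "g \<in> MapE adj" "h \<in> MapE adj" and eq: "liftE adj g = liftE adj h"
  show "g = h"
  proof
    fix e
    show "g e = h e"
    proof (cases "e \<in> Edges adj")
      case True
      have "g e = liftE adj g (path_from adj e)" by (rule liftE_path_from[OF assms True, symmetric])
      also have "\<dots> = h e" unfolding eq by (rule liftE_path_from[OF assms True])
      finally show ?thesis .
    next
      case False
      then have "g e = 0" "h e = 0"
        using \<open>g \<in> MapE adj\<close> \<open>h \<in> MapE adj\<close> unfolding MapE_def by blast+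
      then show ?thesis by simp
    qed
  qed
qed

lemma D1_subset_liftE:
  assumes g: "graph_ok V adj"
  shows "Dm adj 1 \<subseteq> liftE adj ` MapE adj"
proof
  fix f assume f: "f \<in> Dm adj 1"
  define h where "h e = (if e \<in> Edges adj then f (path_from adj e) else 0)" for e
  have "f p = liftE adj h p" for p
  proof (cases "p \<in> Paths adj")
    case True
    hence e: "p 0 \<in> Edges adj" by (rule Paths_edge)
    have "\<forall>i<1. p i = path_from adj (p 0) i" using path_from_0[OF g e] by simp
    hence "f p = f (path_from adj (p 0))"
      using f True path_from_in_Paths[OF g e] unfolding Dm_def by blast
    thus ?thesis using True e by (simp add: liftE_def h_def)
  next
    case False
    have "f \<in> FunP adj" using f unfolding Dm_def by blast
    thus ?thesis using False by (simp add: FunP_def liftE_def)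
  qed
  hence "f = liftE adj h" ..
  moreover have "h \<in> MapE adj" by (simp add: MapE_def h_def)
  ultimately show "f \<in> liftE adj ` MapE adj" by blast
qed

lemma Transfer_liftE:
  "p \<in> Paths adj \<Longrightarrow> Transfer adj (liftE adj g) p = Sop adj g (p 0)"
  unfolding Transfer_def Sop_def liftE_def by (simp add: Paths_Cons)

lemma liftE_in_Eigenspace_iff:
  assumes g: "graph_ok V adj" and h: "h \<in> MapE adj"
  shows "liftE adj h \<in> Eigenspace adj z \<longleftrightarrow> h \<in> EqS adj z"
proof -
  have on_path: "Transfer adj (liftE adj h) p = z * liftE adj h p \<longleftrightarrow> Sop adj h (p 0) = z * h (p 0)"
    if "p \<in> Paths adj" for p
    using that by (simp add: Transfer_liftE liftE_def)
  have off_path: "Transfer adj (liftE adj h) p = z * liftE adj h p" if "p \<notin> Paths adj" for p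
    using that by (simp add: Transfer_def liftE_def)
  have "Transfer adj (liftE adj h) = (\<lambda>p. z * liftE adj h p)
      \<longleftrightarrow> (\<forall>p\<in>Paths adj. Sop adj h (p 0) = z * h (p 0))"
    unfolding fun_eq_iff using on_path off_path by blast
  also have "\<dots> \<longleftrightarrow> (\<forall>e\<in>Edges adj. Sop adj h e = z * h e)"
    using path_from_in_Paths[OF g] path_from_0[OF g] Paths_edge by metis
  finally show ?thesis
    using h liftE_in_D1 by (auto simp: Eigenspace_def EqS_def Dinf_def)
qed

lemma bij_betw_liftE_EqS:
  assumes g: "graph_ok V adj" and z: "z \<noteq> 0"
  shows "bij_betw (liftE adj) (EqS adj z) (Eigenspace adj z)"
proof (rule bij_betw_imageI)
  have EqS_MapE: "EqS adj z \<subseteq> MapE adj" by (simp add: EqS_def)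
  show "inj_on (liftE adj) (EqS adj z)"
    using inj_on_subset[OF inj_on_liftE[OF g] EqS_MapE] .
  show "liftE adj ` EqS adj z = Eigenspace adj z"
  proof (intro equalityI subsetI)
    fix f assume "f \<in> Eigenspace adj z"
    then obtain h where "h \<in> MapE adj" "f = liftE adj h"
      using Eigenspace_subset_D1[OF z] D1_subset_liftE[OF g] by blast
    thus "f \<in> liftE adj ` EqS adj z"
      using liftE_in_Eigenspace_iff[OF g] \<open>f \<in> Eigenspace adj z\<close> by blast
  qed (use liftE_in_Eigenspace_iff[OF g] EqS_MapE in blast)
qed

lemma EqV_SigmaOp_Rz_eq_DeltaOp_Lz:
  "EqV V (SigmaOp adj) (Rz adj z) = EqV V (DeltaOp adj) (Lz adj z)"
proof -
  have "SigmaOp adj f v = Rz adj z f v \<longleftrightarrow> DeltaOp adj f v = Lz adj z f v" for f v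
  proof -
    have "1 + of_nat (qv adj v) \<noteq> (0 :: complex)"
      by (metis of_nat_Suc of_nat_neq_0)
    thus ?thesis unfolding SigmaOp_def Rz_def DeltaOp_def Lz_def by (auto simp: field_simps)
  qed
  thus ?thesis by (simp add: EqV_def)
qed

lemma dz_linear: "dz adj z (\<lambda>v. a * f v + g v) = (\<lambda>e. a * dz adj z f e + dz adj z g e)"
  by (simp add: dz_def fun_eq_iff add_divide_distrib algebra_simps)

lemma dz_adj: "adj u w \<Longrightarrow> dz adj z f (u, w) = f u - f w / z"
  by (simp add: dz_def Edges_def)

definition incoming_sum :: "('v \<Rightarrow> 'v \<Rightarrow> bool) \<Rightarrow> ('v \<times> 'v \<Rightarrow> complex) \<Rightarrow> 'v \<Rightarrow> complex" where
  "incoming_sum adj h u = (\<Sum>x\<in>{x. adj u x}. h (x, u))"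

lemma Sop_incoming_sum:
  assumes g: "graph_ok V adj" and a: "adj u w"
  shows "Sop adj h (u, w) = incoming_sum adj h u - h (w, u)"
proof -
  have "{e\<in>Edges adj. turn e (u, w)} = (\<lambda>x. (x, u)) ` ({x. adj u x} - {w})"
    using graph_ok_sym[OF g] by (auto simp: Edges_def turn_def image_iff)
  hence "Sop adj h (u, w) = (\<Sum>x\<in>{x. adj u x} - {w}. h (x, u))"
    unfolding Sop_def by (simp add: sum.reindex inj_on_def)
  also have "\<dots> = incoming_sum adj h u - h (w, u)"
    using a graph_ok_finite_neighbours[OF g] by (simp add: sum_diff1 incoming_sum_def)
  finally show ?thesis .
qed

lemma incoming_sum_dz:
  assumes g: "graph_ok V adj" and f: "f \<in> EqV V (SigmaOp adj) (Rz adj z)" and u: "u \<in> V"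
  shows "incoming_sum adj (dz adj z f) u = z * f u - f u / z"
proof -
  let ?N = "{x. adj u x}" and ?q = "of_nat (qv adj u) :: complex"
  have "incoming_sum adj (dz adj z f) u = (\<Sum>x\<in>?N. f x - f u / z)"
    unfolding incoming_sum_def by (rule sum.cong) (simp_all add: dz_adj graph_ok_sym[OF g])
  also have "\<dots> = SigmaOp adj f u - (1 + ?q) * (f u / z)"
    using graph_ok_card_neighbours[OF g u] by (simp add: sum_subtractf SigmaOp_def)
  also have "SigmaOp adj f u = (z + ?q / z) * f u"
    using f u by (simp add: EqV_def Rz_def)
  finally show ?thesis by (simp add: add_divide_distrib algebra_simps)
qed

lemma dz_in_EqS:
  assumes g: "graph_ok V adj" and z: "z \<noteq> 0" and f: "f \<in> EqV V (SigmaOp adj) (Rz adj z)"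
  shows "dz adj z f \<in> EqS adj z"
proof -
  have "Sop adj (dz adj z f) (u, w) = z * dz adj z f (u, w)" if a: "adj u w" for u w
  proof -
    have u: "u \<in> V" using graph_ok_in_V[OF g a] by simp
    have "Sop adj (dz adj z f) (u, w) = (z * f u - f u / z) - (f w - f u / z)"
      using Sop_incoming_sum[OF g a] incoming_sum_dz[OF g f u] dz_adj[of adj w u, OF graph_ok_sym[OF g a]]
      by simp
    also have "\<dots> = z * dz adj z f (u, w)"
      using dz_adj[of adj u w z f, OF a] z by (simp add: right_diff_distrib)
    finally show ?thesis .
  qed
  thus ?thesis by (auto simp: EqS_def MapE_def dz_def Edges_def)
qed

lemma dz_eq_zero_imp_zero:
  assumes g: "graph_ok V adj" and z: "z \<noteq> 0" "z * z \<noteq> 1"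
    and f: "f \<in> MapV V" and dz0: "dz adj z f = (\<lambda>e. 0)"
  shows "f = (\<lambda>v. 0)"
proof
  fix u show "f u = 0"
  proof (cases "u \<in> V")
    case True
    then obtain w where a: "adj u w" using graph_ok_exists_neighbour[OF g] by blast
    have "f u = f w / z" using fun_cong[OF dz0, of "(u, w)"] dz_adj[of adj u w z f, OF a] by simp
    moreover have "f w = f u / z"
      using fun_cong[OF dz0, of "(w, u)"] dz_adj[of adj w u z f, OF graph_ok_sym[OF g a]] by simp
    ultimately have "(z * z - 1) * f u = 0" using z(1) by (simp add: field_simps)
    thus ?thesis using z(2) by simp
  qed (use f in \<open>simp add: MapV_def\<close>)
qed

lemma inj_on_dz:
  assumes g: "graph_ok V adj" and z: "z \<noteq> 0" "z * z \<noteq> 1"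
  shows "inj_on (dz adj z) (MapV V)"
proof (rule inj_onI)
  fix f1 f2 assume f1: "f1 \<in> MapV V" and f2: "f2 \<in> MapV V" and eq: "dz adj z f1 = dz adj z f2"
  have "dz adj z (\<lambda>v. - 1 * f2 v + f1 v) = (\<lambda>e. 0)"
    unfolding dz_linear eq by simp
  moreover have "(\<lambda>v. - 1 * f2 v + f1 v) \<in> MapV V" using f1 f2 by (simp add: MapV_def)
  ultimately have "(\<lambda>v. - 1 * f2 v + f1 v) = (\<lambda>v. 0)" by (rule dz_eq_zero_imp_zero[OF g z, rotated])
  thus "f1 = f2" by (simp add: fun_eq_iff)
qed

lemma EqS_incoming_sum_reverse:
  assumes g: "graph_ok V adj" and h: "h \<in> EqS adj z" and a: "adj u w"
  shows "z * h (u, w) = incoming_sum adj h u - h (w, u)"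
proof -
  have "(u, w) \<in> Edges adj" using a by (simp add: Edges_def)
  hence "Sop adj h (u, w) = z * h (u, w)" using h by (simp add: EqS_def)
  thus ?thesis using Sop_incoming_sum[OF g a] by simp
qed

lemma EqS_incoming_sum_diff:
  assumes g: "graph_ok V adj" and h: "h \<in> EqS adj z" and a: "adj u w"
  shows "(z * z - 1) * h (u, w) = z * incoming_sum adj h u - incoming_sum adj h w"
  using EqS_incoming_sum_reverse[OF g h a] EqS_incoming_sum_reverse[OF g h graph_ok_sym[OF g a]] by algebra

lemma SigmaOp_incoming_sum:
  assumes g: "graph_ok V adj" and z: "z \<noteq> 0" and h: "h \<in> EqS adj z" and u: "u \<in> V"
  shows "SigmaOp adj (incoming_sum adj h) u = (z + of_nat (qv adj u) / z) * incoming_sum adj h u"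
proof -
  let ?N = "{x. adj u x}" and ?q = "of_nat (qv adj u) :: complex"
    and ?A = "incoming_sum adj h" and ?G = "\<Sum>w\<in>{x. adj u x}. h (u, w)"
  have card: "of_nat (card ?N) = 1 + ?q" using graph_ok_card_neighbours[OF g u] by simp
  have "z * ?G = (\<Sum>w\<in>?N. ?A u - h (w, u))"
    by (simp add: sum_distrib_left EqS_incoming_sum_reverse[OF g h])
  also have "\<dots> = ?q * ?A u"
    using card by (simp add: sum_subtractf incoming_sum_def[symmetric] algebra_simps)
  finally have G: "?G = ?q * ?A u / z" using z by (simp add: field_simps)
  have "SigmaOp adj ?A u = (\<Sum>w\<in>?N. z * ?A u - (z * z - 1) * h (u, w))"
    unfolding SigmaOp_def by (rule sum.cong) (simp_all add: EqS_incoming_sum_diff[OF g h])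
  also have "\<dots> = (1 + ?q) * z * ?A u - (z * z - 1) * ?G"
    using card by (simp add: sum_subtractf sum_distrib_left)
  also have "\<dots> = (z + ?q / z) * ?A u"
    unfolding G using z by (simp add: field_simps)
  finally show ?thesis .
qed

lemma dz_onto_EqS:
  assumes g: "graph_ok V adj" and z: "z \<noteq> 0" "z * z \<noteq> 1" and h: "h \<in> EqS adj z"
  shows "\<exists>f\<in>EqV V (SigmaOp adj) (Rz adj z). dz adj z f = h"
proof -
  let ?A = "incoming_sum adj h" and ?c = "z / (z * z - 1)"
  have d: "z * z - 1 \<noteq> 0" using z(2) by simp
  define f where "f v = (if v \<in> V then ?c * ?A v else 0)" for v
  have "dz adj z f e = h e" for e
  proof (cases "e \<in> Edges adj")
    case True
    then obtain u w where e: "e = (u, w)" and a: "adj u w" by (auto simp: Edges_def)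
    have "u \<in> V" "w \<in> V" using graph_ok_in_V[OF g a] by auto
    hence "dz adj z f e = ?c * ?A u - ?c * ?A w / z"
      using dz_adj[of adj u w z f, OF a] e by (simp add: f_def)
    also have "\<dots> = (z * ?A u - ?A w) / (z * z - 1)"
      using z(1) by (simp add: diff_divide_distrib)
    also have "\<dots> = h e"
      using EqS_incoming_sum_diff[OF g h a] e d by (simp add: field_simps)
    finally show ?thesis .
  next
    case False
    moreover have "h e = 0" using h False unfolding EqS_def MapE_def by blast
    ultimately show ?thesis by (simp add: dz_def)
  qed
  hence "dz adj z f = h" ..
  moreover have "SigmaOp adj f u = Rz adj z f u" if u: "u \<in> V" for u
  proof -
    have "SigmaOp adj f u = ?c * SigmaOp adj ?A u"
      unfolding SigmaOp_def sum_distrib_left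
      by (rule sum.cong) (auto simp: f_def dest: graph_ok_in_V[OF g])
    thus ?thesis using SigmaOp_incoming_sum[OF g z(1) h u] u by (simp add: Rz_def f_def)
  qed
  hence "f \<in> EqV V (SigmaOp adj) (Rz adj z)" by (simp add: EqV_def MapV_def f_def)
  ultimately show ?thesis by blast
qed

lemma bij_betw_dz_EqS:
  assumes g: "graph_ok V adj" and z: "z \<noteq> 0" "z * z \<noteq> 1"
  shows "bij_betw (dz adj z) (EqV V (SigmaOp adj) (Rz adj z)) (EqS adj z)"
proof (rule bij_betw_imageI)
  show "inj_on (dz adj z) (EqV V (SigmaOp adj) (Rz adj z))"
    by (rule inj_on_subset[OF inj_on_dz[OF g z]]) (auto simp: EqV_def)
  show "dz adj z ` EqV V (SigmaOp adj) (Rz adj z) = EqS adj z"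
    using dz_in_EqS[OF g z(1)] dz_onto_EqS[OF g z] by blast
qed

theorem mainTheorem11:
  fixes V :: "'v set" and adj :: "'v \<Rightarrow> 'v \<Rightarrow> bool" and z :: complex
  assumes "graph_ok V adj" and "z \<noteq> 0"
  shows "Eigenspace adj z \<subseteq> Dm adj 1
       \<and> Eigenspace adj z = liftE adj ` EqS adj z
       \<and> (z \<notin> {-1, 0, 1} \<longrightarrow>
            EqV V (SigmaOp adj) (Rz adj z) = EqV V (DeltaOp adj) (Lz adj z)
          \<and> (\<forall>f g a. dz adj z (\<lambda>v. a * f v + g v) = (\<lambda>e. a * dz adj z f e + dz adj z g e))
          \<and> bij_betw (\<lambda>f. liftE adj (dz adj z f)) (EqV V (SigmaOp adj) (Rz adj z)) (Eigenspace adj z))"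
proof (intro conjI impI allI)
  note g = assms(1) and z = assms(2)
  show "Eigenspace adj z \<subseteq> Dm adj 1" by (rule Eigenspace_subset_D1[OF z])
  show "Eigenspace adj z = liftE adj ` EqS adj z"
    using bij_betw_liftE_EqS[OF g z] by (simp add: bij_betw_def)
  show "EqV V (SigmaOp adj) (Rz adj z) = EqV V (DeltaOp adj) (Lz adj z)"
    by (rule EqV_SigmaOp_Rz_eq_DeltaOp_Lz)
  show "dz adj z (\<lambda>v. a * f v + g v) = (\<lambda>e. a * dz adj z f e + dz adj z g e)" for f g a
    by (rule dz_linear)
  assume "z \<notin> {-1, 0, 1}"
  hence "z * z \<noteq> 1" by (simp add: square_eq_1_iff)
  from bij_betw_trans[OF bij_betw_dz_EqS[OF g z this] bij_betw_liftE_EqS[OF g z]]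
  show "bij_betw (\<lambda>f. liftE adj (dz adj z f)) (EqV V (SigmaOp adj) (Rz adj z)) (Eigenspace adj z)"
    by (simp add: comp_def)
qed

end
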